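(* Let $I\subseteq R$ be a good ideal. For each $i\in\{1,\dots,n\}$ let $e_i$ be the $i$-th standard unit vector of $\mathbb N^n$ and let $q_i$ be the smallest nonnegative integer such that $I_{te_i}=I_{q_ie_i}$ for all integers $t\ge q_i$ (such $q_i$ exists). Then the Ratliff--Rush closure of $I$ is $$\tilde I=I_{q_1,0,\dots,0}\cap I_{0,q_2,0,\dots,0}\cap\cdots\cap I_{0,\dots,0,q_n}.$$
   Context: Let $\mathbb K$ be a field, $R=\mathbb K[x_1,\dots,x_n]$, $\mathfrak m=\langle x_1,\dots,x_n\rangle$, $\mathbb N=\{0,1,2,\dots\}$. A monomial $x_1^{\alpha_1}\cdots x_n^{\alpha_n}$ is identified with the point $(\alpha_1,\dots,\alpha_n)\in\mathbb N^n$. For a monomial ideal $I$, $G(I)$ denotes its (unique) minimal monomial generating set. If $I$ is an $\mathfrak m$-primary monomial ideal, then for each $i$ there is a unique $d_i\ge1$ with $x_i^{d_i}\in G(I)$; write $\mu_i=x_i^{d_i}$. For $(a_1,\dots,a_n)\in\mathbb N^n$ the box associated to $I$ is $B_{a_1,\dots,a_n}=([a_1d_1,(a_1+1)d_1]\times\cdots\times[a_nd_n,(a_n+1)d_n])\cap\mathbb N^n$; a monomial belongs to a box if its exponent vector does. An $\mathfrak m$-primary monomial ideal $I$ is called good if for every integer $l\ge1$, every element of $G(I^l)$ belongs to some box $B_{a_1,\dots,a_n}$ with $a_1+\dots+a_n=l-1$. For a good ideal $I$ and $a=(a_1,\dots,a_n)\in\mathbb N^n$, with $l=a_1+\dots+a_n+1$,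 define $I_{a}=I_{a_1,\dots,a_n}=\left\langle \frac{m}{\mu_1^{a_1}\cdots\mu_n^{a_n}} : m\in B_{a_1,\dots,a_n}\cap G(I^l)\right\rangle$. The Ratliff--Rush closure of a regular ideal $I$ is $\tilde I=\bigcup_{k\ge0}(I^{k+1}:I^k)$. *)

theory Defs
  imports Main "HOL-Library.Poly_Mapping"
begin

text \<open>Polynomial ring K[x_i : i in 'n] over a field, 'n a finite type of variables
  (n = CARD of the variable type); exponents are finitely supported maps.\<close>

type_synonym ('n, 'k) mpoly = "('n \<Rightarrow>\<^sub>0 nat) \<Rightarrow>\<^sub>0 'k"

definition monom :: "('n \<Rightarrow>\<^sub>0 nat) \<Rightarrow> ('n, 'k::field) mpoly" where
  "monom \<alpha> = Poly_Mapping.single \<alpha> 1"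

definition var :: "'n \<Rightarrow> ('n, 'k::field) mpoly" where
  "var i = monom (Poly_Mapping.single i 1)"

definition ideal_gen :: "('n, 'k::field) mpoly set \<Rightarrow> ('n, 'k) mpoly set" where
  "ideal_gen S = {x. \<exists>F c. finite F \<and> F \<subseteq> S \<and> x = (\<Sum>s\<in>F. c s * s)}"

definition is_ideal :: "('n, 'k::field) mpoly set \<Rightarrow> bool" where
  "is_ideal I \<longleftrightarrow> 0 \<in> I \<and> (\<forall>a\<in>I. \<forall>b\<in>I. a + b \<in> I) \<and> (\<forall>r. \<forall>a\<in>I. r * a \<in> I)"

definition ideal_mult :: "('n, 'k::field) mpoly set \<Rightarrow> ('n, 'k) mpoly set \<Rightarrow> ('n, 'k) mpoly set" where
  "ideal_mult I J = ideal_gen {a * b | a b. a \<in> I \<and> b \<in> J}"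

primrec ideal_pow :: "('n, 'k::field) mpoly set \<Rightarrow> nat \<Rightarrow> ('n, 'k) mpoly set" where
  "ideal_pow I 0 = UNIV"
| "ideal_pow I (Suc k) = ideal_mult I (ideal_pow I k)"

definition ideal_colon :: "('n, 'k::field) mpoly set \<Rightarrow> ('n, 'k) mpoly set \<Rightarrow> ('n, 'k) mpoly set" where
  "ideal_colon I J = {r. \<forall>j\<in>J. r * j \<in> I}"

definition radical :: "('n, 'k::field) mpoly set \<Rightarrow> ('n, 'k) mpoly set" where
  "radical I = {f. \<exists>k. f ^ k \<in> I}"

definition max_ideal :: "('n, 'k::field) mpoly set" where
  "max_ideal = ideal_gen (range var)"

definition monomial_ideal :: "('n, 'k::field) mpoly set \<Rightarrow> bool" where
  "monomial_ideal I \<longleftrightarrow> (\<exists>S. I = ideal_gen (monom ` S))"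

definition m_primary :: "('n, 'k::field) mpoly set \<Rightarrow> bool" where
  "m_primary I \<longleftrightarrow> is_ideal I \<and> radical I = max_ideal"

definition exp_le :: "('n \<Rightarrow>\<^sub>0 nat) \<Rightarrow> ('n \<Rightarrow>\<^sub>0 nat) \<Rightarrow> bool" where
  "exp_le \<beta> \<alpha> \<longleftrightarrow> (\<forall>i. Poly_Mapping.lookup \<beta> i \<le> Poly_Mapping.lookup \<alpha> i)"

definition mingens :: "('n, 'k::field) mpoly set \<Rightarrow> ('n \<Rightarrow>\<^sub>0 nat) set" where
  "mingens I = {\<alpha>. monom \<alpha> \<in> I \<and> (\<forall>\<beta>. exp_le \<beta> \<alpha> \<and> \<beta> \<noteq> \<alpha> \<longrightarrow> monom \<beta> \<notin> I)}"

definition pdeg :: "('n, 'k::field) mpoly set \<Rightarrow> 'n \<Rightarrow> nat" where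
  "pdeg I i = (THE d. Poly_Mapping.single i d \<in> mingens I)"

definition box :: "('n, 'k::field) mpoly set \<Rightarrow> ('n \<Rightarrow> nat) \<Rightarrow> ('n \<Rightarrow>\<^sub>0 nat) set" where
  "box I a = {\<beta>. \<forall>i. a i * pdeg I i \<le> Poly_Mapping.lookup \<beta> i \<and> Poly_Mapping.lookup \<beta> i \<le> (a i + 1) * pdeg I i}"

definition good :: "('n::finite, 'k::field) mpoly set \<Rightarrow> bool" where
  "good I \<longleftrightarrow> m_primary I \<and> monomial_ideal I \<and>
     (\<forall>l\<ge>1. \<forall>\<alpha>\<in>mingens (ideal_pow I l). \<exists>a. (\<Sum>i\<in>UNIV. a i) = l - 1 \<and> \<alpha> \<in> box I a)"

text \<open>Exponent vector of mu_1^{a_1} ... mu_n^{a_n}.\<close>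
definition shift :: "('n::finite, 'k::field) mpoly set \<Rightarrow> ('n \<Rightarrow> nat) \<Rightarrow> ('n \<Rightarrow>\<^sub>0 nat)" where
  "shift I a = (\<Sum>i\<in>UNIV. Poly_Mapping.single i (a i * pdeg I i))"

definition Ia :: "('n::finite, 'k::field) mpoly set \<Rightarrow> ('n \<Rightarrow> nat) \<Rightarrow> ('n, 'k) mpoly set" where
  "Ia I a = ideal_gen {monom (\<alpha> - shift I a) | \<alpha>.
              \<alpha> \<in> box I a \<inter> mingens (ideal_pow I ((\<Sum>i\<in>UNIV. a i) + 1))}"

definition ratliff_rush :: "('n, 'k::field) mpoly set \<Rightarrow> ('n, 'k) mpoly set" where
  "ratliff_rush I = (\<Union>k. ideal_colon (ideal_pow I (k + 1)) (ideal_pow I k))"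

definition unitv :: "nat \<Rightarrow> 'n \<Rightarrow> ('n \<Rightarrow> nat)" where
  "unitv t i = (\<lambda>j. if j = i then t else 0)"

end

theory Submission
  imports Defs "HOL-Library.Multiset" "HOL-Library.FuncSet" "HOL-Library.Set_Algebras"
begin

text \<open>All ideals involved are monomial, so everything reduces to the upward closed sets \<open>E\<^sub>k\<close> of
  exponents of \<open>I\<^sup>k\<close>. For a good ideal, \<open>I\<^sub>t\<^sub>e\<^sub>i\<close> is the colon ideal
  \<open>I\<^bsup>t+1\<^esup> : \<mu>\<^sub>i\<^sup>t\<close>; these increase with \<open>t\<close> and contain every monomial divisible by some
  \<open>\<mu>\<^sub>j\<close>, so they stabilise. The Ratliff--Rush closure is the union of the increasing chain
  \<open>I\<^bsup>k+1\<^esup> : I\<^sup>k\<close>, each member of which lies in \<open>I\<^bsup>t+1\<^esup> : \<mu>\<^sub>i\<^sup>t\<close> for \<open>t \<ge> k\<close>.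
  Conversely, goodness forces every monomial \<open>u \<in> I\<close> to have weighted degree
  \<open>\<Sum>\<^sub>j u\<^sub>j / d\<^sub>j \<ge> 1\<close>, so \<open>u\<^bsup>T L\<^esup>\<close> is a product of at least \<open>T L\<close> pure powers \<open>\<mu>\<^sub>j\<close>
  among which some \<open>\<mu>\<^sub>i\<close> occurs \<open>T\<close> times. A monomial \<open>v\<close> in all stable colon ideals
  therefore absorbs \<open>u\<^bsup>T L\<^esup>\<close>, and by pigeonhole every product of sufficiently many
  generators of \<open>I\<close> contains such a power; hence \<open>v I\<^sup>k \<subseteq> I\<^bsup>k+1\<^esup>\<close> for large \<open>k\<close>.\<close>

lemma finite_subset_UN_mono:
  assumes "mono (A :: nat \<Rightarrow> 'a set)" "finite F" "F \<subseteq> (\<Union>k. A k)"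
  shows "\<exists>k. F \<subseteq> A k"
  using assms(2,3)
proof (induction F rule: finite_induct)
  case (insert x F)
  then obtain k1 k2 where "x \<in> A k1" "F \<subseteq> A k2"
    by blast
  then have "insert x F \<subseteq> A (max k1 k2)"
    using monoD[OF assms(1), of k1 "max k1 k2"] monoD[OF assms(1), of k2 "max k1 k2"] by auto
  then show ?case
    by blast
qed simp

lemma finite_mono_chain_stable:
  assumes mono: "\<And>t. K t \<subseteq> K (Suc t)" and bounded: "\<And>t. K t \<subseteq> B" and "finite B"
  shows "\<exists>q. \<forall>t\<ge>q. K t = K q"
proof -
  have card_le: "card (K t) \<le> card B" for t
    using \<open>finite B\<close> bounded by (rule card_mono)
  have fin: "finite (range (\<lambda>t. card (K t)))"
    by (rule finite_subset[of _ "{..card B}"]) (auto simp: card_le)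
  obtain q where q: "card (K q) = Max (range (\<lambda>t. card (K t)))"
    using Max_in[OF fin] by auto
  have "K q = K t" if "q \<le> t" for t
  proof (rule card_seteq)
    show "finite (K t)"
      using bounded \<open>finite B\<close> by (rule finite_subset)
    show "K q \<subseteq> K t"
      using lift_Suc_mono_le[of K, OF mono that] .
    show "card (K t) \<le> card (K q)"
      unfolding q using fin by (rule Max_ge) simp
  qed
  then show ?thesis
    by blast
qed

lemma multiset_pigeonhole:
  assumes "set_mset A \<subseteq> F" "finite F" "card F * M < size A"
  obtains u where "u \<in> F" "M < count A u"
proof -
  have "size A = sum (count A) F"
    unfolding size_multiset_overloaded_eq
    by (rule sum.mono_neutral_left[OF assms(2,1)]) (auto simp: not_in_iff)
  then have "\<not> (\<forall>u\<in>F. count A u \<le> M)"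
    using sum_bounded_above[of F "count A" M] assms(3) by auto
  with that show thesis
    by (auto simp: not_le)
qed

section \<open>Exponent vectors\<close>

lemma exp_le_refl [simp]: "exp_le \<alpha> \<alpha>"
  by (simp add: exp_le_def)

lemma exp_le_trans: "exp_le \<alpha> \<beta> \<Longrightarrow> exp_le \<beta> \<gamma> \<Longrightarrow> exp_le \<alpha> \<gamma>"
  unfolding exp_le_def using le_trans by blast

lemma exp_le_add_mono: "exp_le \<alpha> \<beta> \<Longrightarrow> exp_le \<gamma> \<delta> \<Longrightarrow> exp_le (\<alpha> + \<gamma>) (\<beta> + \<delta>)"
  unfolding exp_le_def by (simp add: lookup_add add_mono)

lemma exp_le_add_left [simp]: "exp_le \<alpha> (\<beta> + \<alpha>)"
  unfolding exp_le_def by (simp add: lookup_add)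

lemma exp_le_0 [simp]: "exp_le 0 \<alpha>"
  by (simp add: exp_le_def)

lemma exp_le_diff_add: "exp_le \<alpha> \<beta> \<Longrightarrow> \<beta> - \<alpha> + \<alpha> = \<beta>"
  unfolding exp_le_def by (intro poly_mapping_eqI) (simp add: lookup_add lookup_minus)

lemma exp_le_single_iff: "exp_le (Poly_Mapping.single i a) (Poly_Mapping.single i b) \<longleftrightarrow> a \<le> b"
  unfolding exp_le_def by (auto simp: lookup_single when_def)

lemma exp_le_strict_imp_less:
  assumes "exp_le \<beta> \<alpha>" "\<beta> \<noteq> \<alpha>"
  obtains j where "Poly_Mapping.lookup \<beta> j < Poly_Mapping.lookup \<alpha> j"
proof -
  have "\<exists>j. Poly_Mapping.lookup \<beta> j \<noteq> Poly_Mapping.lookup \<alpha> j"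
    using assms(2) by (metis poly_mapping_eqI)
  then show thesis
    using assms(1) that unfolding exp_le_def by (auto simp: order.strict_iff_order)
qed

lemma exp_le_single_imp_single:
  "exp_le \<beta> (Poly_Mapping.single i c) \<Longrightarrow> \<beta> = Poly_Mapping.single i (Poly_Mapping.lookup \<beta> i)"
  unfolding exp_le_def
  by (intro poly_mapping_eqI) (metis le_zero_eq lookup_single_eq lookup_single_not_eq)

definition upset :: "('n \<Rightarrow>\<^sub>0 nat) set \<Rightarrow> ('n \<Rightarrow>\<^sub>0 nat) set" where
  "upset A = {\<beta>. \<exists>\<alpha>\<in>A. exp_le \<alpha> \<beta>}"

definition upclosed :: "('n \<Rightarrow>\<^sub>0 nat) set \<Rightarrow> bool" where
  "upclosed X \<longleftrightarrow> (\<forall>\<alpha>\<in>X. \<forall>\<beta>. exp_le \<alpha> \<beta> \<longrightarrow> \<beta> \<in> X)"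

lemma upclosedD: "upclosed X \<Longrightarrow> \<alpha> \<in> X \<Longrightarrow> exp_le \<alpha> \<beta> \<Longrightarrow> \<beta> \<in> X"
  unfolding upclosed_def by blast

lemma upclosed_upset: "upclosed (upset A)"
  unfolding upclosed_def upset_def using exp_le_trans by blast

lemma subset_upset: "A \<subseteq> upset A"
  unfolding upset_def using exp_le_refl by blast

lemma upset_eq_self: "upclosed X \<Longrightarrow> upset X = X"
  unfolding upclosed_def upset_def using exp_le_refl by blast

lemma upclosed_Inter: "(\<And>i. upclosed (A i)) \<Longrightarrow> upclosed (\<Inter>i. A i)"
  unfolding upclosed_def by blast

lemma upclosed_colon_set:
  assumes "upclosed X"
  shows "upclosed {v. \<forall>y\<in>Y. v + y \<in> X}"
  unfolding upclosed_def
proof (intro ballI allI impI CollectI)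
  fix v w y assume "v \<in> {v. \<forall>y\<in>Y. v + y \<in> X}" "exp_le v w" "y \<in> Y"
  then have "v + y \<in> X" "exp_le (v + y) (w + y)"
    by (simp_all add: exp_le_add_mono)
  with assms show "w + y \<in> X"
    by (blast intro: upclosedD)
qed

definition minimal_elems :: "('n \<Rightarrow>\<^sub>0 nat) set \<Rightarrow> ('n \<Rightarrow>\<^sub>0 nat) set" where
  "minimal_elems X = {\<alpha> \<in> X. \<forall>\<beta>. exp_le \<beta> \<alpha> \<and> \<beta> \<noteq> \<alpha> \<longrightarrow> \<beta> \<notin> X}"

lemma exists_minimal_elem_below:
  fixes w :: "'n::finite \<Rightarrow>\<^sub>0 nat"
  assumes "w \<in> X"
  obtains g where "g \<in> minimal_elems X" "exp_le g w"
  using assms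
proof (induction "\<Sum>j\<in>UNIV. Poly_Mapping.lookup w j" arbitrary: w rule: less_induct)
  case less
  show ?case
  proof (cases "w \<in> minimal_elems X")
    case False
    then obtain \<beta> where \<beta>: "exp_le \<beta> w" "\<beta> \<noteq> w" "\<beta> \<in> X"
      using less.prems(2) unfolding minimal_elems_def by blast
    obtain j where "Poly_Mapping.lookup \<beta> j < Poly_Mapping.lookup w j"
      using \<beta>(1,2) by (rule exp_le_strict_imp_less)
    then have "(\<Sum>j\<in>UNIV. Poly_Mapping.lookup \<beta> j) < (\<Sum>j\<in>UNIV. Poly_Mapping.lookup w j)"
      using \<beta>(1) unfolding exp_le_def by (intro sum_strict_mono_ex1) auto
    with \<beta> less.hyps less.prems(1) show ?thesis
      using exp_le_trans by blast
  qed (use less.prems in auto)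
qed

lemma single_mem_minimal_elems_iff:
  assumes "\<exists>c. Poly_Mapping.single i c \<in> X"
  shows "Poly_Mapping.single i c \<in> minimal_elems X \<longleftrightarrow> c = (LEAST c. Poly_Mapping.single i c \<in> X)"
    (is "_ \<longleftrightarrow> c = ?d")
proof
  have d: "Poly_Mapping.single i ?d \<in> X" "\<And>c. Poly_Mapping.single i c \<in> X \<Longrightarrow> ?d \<le> c"
    using assms by (auto intro: LeastI_ex Least_le)
  assume c: "Poly_Mapping.single i c \<in> minimal_elems X"
  then have "?d \<le> c"
    using d(2) unfolding minimal_elems_def by blast
  moreover have "\<not> ?d < c"
  proof
    assume "?d < c"
    then have "exp_le (Poly_Mapping.single i ?d) (Poly_Mapping.single i c)"
      "Poly_Mapping.single i ?d \<noteq> Poly_Mapping.single i c"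
      by (simp_all add: exp_le_single_iff inj_eq)
    with c d(1) show False
      unfolding minimal_elems_def by blast
  qed
  ultimately show "c = ?d"
    by simp
next
  assume c: "c = ?d"
  have "\<beta> \<notin> X" if "exp_le \<beta> (Poly_Mapping.single i c)" "\<beta> \<noteq> Poly_Mapping.single i c" for \<beta>
  proof -
    have \<beta>: "\<beta> = Poly_Mapping.single i (Poly_Mapping.lookup \<beta> i)"
      using that(1) by (rule exp_le_single_imp_single)
    then have "Poly_Mapping.lookup \<beta> i < c"
      using that by (metis exp_le_single_iff order.not_eq_order_implies_strict)
    then show ?thesis
      using \<beta> c not_less_Least by metis
  qed
  moreover have "Poly_Mapping.single i c \<in> X"
    using c assms by (auto intro: LeastI_ex)
  ultimately show "Poly_Mapping.single i c \<in> minimal_elems X"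
    unfolding minimal_elems_def by blast
qed

lemma finite_exps_bounded: "finite {v :: 'n::finite \<Rightarrow>\<^sub>0 nat. \<forall>j. Poly_Mapping.lookup v j \<le> b j}"
proof -
  have "Poly_Mapping.lookup ` {v :: 'n \<Rightarrow>\<^sub>0 nat. \<forall>j. Poly_Mapping.lookup v j \<le> b j} \<subseteq> Pi\<^sub>E UNIV (\<lambda>j. {..b j})"
    by auto
  then have "finite (Poly_Mapping.lookup ` {v :: 'n \<Rightarrow>\<^sub>0 nat. \<forall>j. Poly_Mapping.lookup v j \<le> b j})"
    by (rule finite_subset) (simp add: finite_PiE)
  then show ?thesis
    by (rule finite_imageD) (auto intro: inj_onI poly_mapping_eqI)
qed

lemma lookup_sum_mset_replicate:
  "Poly_Mapping.lookup (sum_mset (replicate_mset n u)) j = n * Poly_Mapping.lookup (u :: 'n \<Rightarrow>\<^sub>0 nat) j"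
  by (induction n) (simp_all add: lookup_add)

section \<open>Monomial ideals\<close>

lemma ideal_gen_zero: "0 \<in> ideal_gen S"
  unfolding ideal_gen_def by (intro CollectI exI[of _ "{}"]) auto

lemma ideal_gen_add:
  assumes "a \<in> ideal_gen S" "b \<in> ideal_gen S"
  shows "a + b \<in> ideal_gen S"
proof -
  obtain F1 c1 F2 c2 where F: "finite F1" "F1 \<subseteq> S" "a = (\<Sum>s\<in>F1. c1 s * s)"
    "finite F2" "F2 \<subseteq> S" "b = (\<Sum>s\<in>F2. c2 s * s)"
    using assms unfolding ideal_gen_def by blast
  define c where "c s = (if s \<in> F1 then c1 s else 0) + (if s \<in> F2 then c2 s else 0)" for s
  have "(\<Sum>s\<in>F1 \<union> F2. c s * s)
      = (\<Sum>s\<in>F1 \<union> F2. if s \<in> F1 then c1 s * s else 0) + (\<Sum>s\<in>F1 \<union> F2. if s \<in> F2 then c2 s * s else 0)"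
    unfolding sum.distrib[symmetric] by (rule sum.cong) (auto simp: c_def distrib_right)
  also have "\<dots> = a + b"
    using F by (simp add: sum.inter_restrict[symmetric] Int_absorb1 Int_absorb2)
  finally show ?thesis
    unfolding ideal_gen_def using F by (intro CollectI exI[of _ "F1 \<union> F2"] exI[of _ c]) auto
qed

lemma ideal_gen_mult_left:
  assumes "a \<in> ideal_gen S"
  shows "r * a \<in> ideal_gen S"
proof -
  obtain F c where F: "finite F" "F \<subseteq> S" "a = (\<Sum>s\<in>F. c s * s)"
    using assms unfolding ideal_gen_def by blast
  have "r * a = (\<Sum>s\<in>F. (r * c s) * s)"
    unfolding F(3) sum_distrib_left by (simp add: mult.assoc)
  with F(1,2) show ?thesis
    unfolding ideal_gen_def by (intro CollectI exI[of _ F] exI[of _ "\<lambda>s. r * c s"]) simp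
qed

lemma ideal_gen_gen: "s \<in> S \<Longrightarrow> s \<in> ideal_gen S"
  unfolding ideal_gen_def by (intro CollectI exI[of _ "{s}"] exI[of _ "\<lambda>_. 1"]) auto

lemma is_ideal_ideal_gen: "is_ideal (ideal_gen S)"
  unfolding is_ideal_def using ideal_gen_zero ideal_gen_add ideal_gen_mult_left by blast

lemma is_ideal_sum:
  assumes "is_ideal J" "finite F" "\<And>x. x \<in> F \<Longrightarrow> g x \<in> J"
  shows "sum g F \<in> J"
  using assms(2,3) assms(1)[unfolded is_ideal_def] by (induction F rule: finite_induct) simp_all

lemma ideal_gen_least:
  assumes "is_ideal J" "S \<subseteq> J"
  shows "ideal_gen S \<subseteq> J"
proof
  fix x assume "x \<in> ideal_gen S"
  then obtain F c where F: "finite F" "F \<subseteq> S" "x = (\<Sum>s\<in>F. c s * s)"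
    unfolding ideal_gen_def by blast
  show "x \<in> J"
    unfolding F(3) using assms F(1,2) by (intro is_ideal_sum) (auto simp: is_ideal_def)
qed

definition mon_ideal :: "('n \<Rightarrow>\<^sub>0 nat) set \<Rightarrow> ('n, 'k::field) mpoly set" where
  "mon_ideal A = ideal_gen (monom ` A)"

lemma monom_mult: "monom \<alpha> * monom \<beta> = (monom (\<alpha> + \<beta>) :: ('n, 'k::field) mpoly)"
  by (simp add: monom_def mult_single)

lemma keys_mon_ideal: "f \<in> mon_ideal A \<Longrightarrow> Poly_Mapping.keys f \<subseteq> upset A"
proof -
  assume "f \<in> mon_ideal A"
  then obtain F c where F: "finite F" "F \<subseteq> monom ` A" "f = (\<Sum>s\<in>F. c s * s)"
    unfolding ideal_gen_def mon_ideal_def by blast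
  have "Poly_Mapping.keys f \<subseteq> (\<Union>s\<in>F. Poly_Mapping.keys (c s * s))"
    unfolding F(3) by (rule keys_sum)
  also have "\<dots> \<subseteq> upset A"
  proof (rule UN_least)
    fix s assume "s \<in> F"
    then obtain \<alpha> where "\<alpha> \<in> A" "s = monom \<alpha>"
      using F(2) by blast
    show "Poly_Mapping.keys (c s * s) \<subseteq> upset A"
    proof
      fix x assume "x \<in> Poly_Mapping.keys (c s * s)"
      then obtain a where "x = a + \<alpha>"
        using keys_mult[of "c s" s] \<open>s = monom \<alpha>\<close> by (auto simp: monom_def)
      then show "x \<in> upset A"
        unfolding upset_def using \<open>\<alpha> \<in> A\<close> exp_le_add_left by blast
    qed
  qed
  finally show ?thesis .
qed

lemma mon_ideal_if_keys:
  assumes "Poly_Mapping.keys f \<subseteq> upset A"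
  shows "f \<in> (mon_ideal A :: ('n, 'k::field) mpoly set)"
proof -
  have "Poly_Mapping.single \<beta> (Poly_Mapping.lookup f \<beta>) \<in> (mon_ideal A :: ('n, 'k) mpoly set)"
    if \<beta>: "\<beta> \<in> Poly_Mapping.keys f" for \<beta>
  proof -
    obtain \<alpha> where \<alpha>: "\<alpha> \<in> A" "exp_le \<alpha> \<beta>"
      using \<beta> assms unfolding upset_def by blast
    have "Poly_Mapping.single \<beta> (Poly_Mapping.lookup f \<beta>)
        = Poly_Mapping.single (\<beta> - \<alpha>) (Poly_Mapping.lookup f \<beta>) * (monom \<alpha> :: ('n, 'k) mpoly)"
      unfolding monom_def mult_single exp_le_diff_add[OF \<alpha>(2)] by simp
    moreover have "(monom \<alpha> :: ('n, 'k) mpoly) \<in> mon_ideal A"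
      unfolding mon_ideal_def using \<alpha>(1) by (intro ideal_gen_gen) blast
    ultimately show ?thesis
      unfolding mon_ideal_def by (simp add: ideal_gen_mult_left)
  qed
  then have "(\<Sum>\<beta>\<in>Poly_Mapping.keys f. Poly_Mapping.single \<beta> (Poly_Mapping.lookup f \<beta>))
      \<in> (mon_ideal A :: ('n, 'k) mpoly set)"
    unfolding mon_ideal_def by (intro is_ideal_sum is_ideal_ideal_gen) auto
  moreover have "(\<Sum>\<beta>\<in>Poly_Mapping.keys f. Poly_Mapping.single \<beta> (Poly_Mapping.lookup f \<beta>)) = f"
    by (intro poly_mapping_eqI)
      (simp add: lookup_sum lookup_single when_def not_in_keys_iff_lookup_eq_zero)
  ultimately show ?thesis
    by simp
qed

lemma mem_mon_ideal_iff: "f \<in> (mon_ideal A :: ('n, 'k::field) mpoly set) \<longleftrightarrow> Poly_Mapping.keys f \<subseteq> upset A"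
  using keys_mon_ideal mon_ideal_if_keys by blast

lemma monom_mem_mon_ideal_iff: "(monom \<beta> :: ('n, 'k::field) mpoly) \<in> mon_ideal A \<longleftrightarrow> \<beta> \<in> upset A"
  by (simp add: mem_mon_ideal_iff monom_def)

lemma mon_ideal_eq_iff: "(mon_ideal A :: ('n, 'k::field) mpoly set) = mon_ideal B \<longleftrightarrow> upset A = upset B"
proof
  assume "(mon_ideal A :: ('n, 'k) mpoly set) = mon_ideal B"
  then show "upset A = upset B"
    using monom_mem_mon_ideal_iff[where 'k='k] by blast
next
  assume "upset A = upset B"
  then show "(mon_ideal A :: ('n, 'k) mpoly set) = mon_ideal B"
    by (intro set_eqI) (simp add: mem_mon_ideal_iff)
qed

lemma mon_ideal_upset: "mon_ideal (upset A) = mon_ideal A"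
  by (simp add: mon_ideal_eq_iff upset_eq_self upclosed_upset)

lemma mon_ideal_Inter:
  assumes "\<And>i. upclosed (A i)"
  shows "(\<Inter>i. mon_ideal (A i)) = (mon_ideal (\<Inter>i. A i) :: ('n, 'k::field) mpoly set)"
proof -
  have "upclosed (\<Inter>i. A i)"
    using assms by (rule upclosed_Inter)
  then show ?thesis
    using assms by (intro set_eqI) (simp add: mem_mon_ideal_iff upset_eq_self, blast)
qed

lemma mon_ideal_UN_mono:
  assumes "mono (A :: nat \<Rightarrow> ('n \<Rightarrow>\<^sub>0 nat) set)" "\<And>k. upclosed (A k)"
  shows "(\<Union>k. mon_ideal (A k)) = (mon_ideal (\<Union>k. A k) :: ('n, 'k::field) mpoly set)"
proof -
  have "upclosed (\<Union>k. A k)"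
    using assms(2) unfolding upclosed_def by blast
  then have "f \<in> mon_ideal (\<Union>k. A k) \<longleftrightarrow> (\<exists>k. Poly_Mapping.keys f \<subseteq> A k)" for f :: "('n, 'k) mpoly"
    using finite_subset_UN_mono[OF assms(1) finite_keys, of f]
    by (auto simp: mem_mon_ideal_iff upset_eq_self)
  moreover have "f \<in> mon_ideal (A k) \<longleftrightarrow> Poly_Mapping.keys f \<subseteq> A k" for f :: "('n, 'k) mpoly" and k
    using assms(2) by (simp add: mem_mon_ideal_iff upset_eq_self)
  ultimately show ?thesis
    by (simp add: set_eq_iff)
qed

lemma mon_ideal_mult: "ideal_mult (mon_ideal A) (mon_ideal B) = (mon_ideal (A + B) :: ('n, 'k::field) mpoly set)"
proof
  show "ideal_mult (mon_ideal A) (mon_ideal B) \<subseteq> (mon_ideal (A + B) :: ('n, 'k) mpoly set)"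
    unfolding ideal_mult_def
  proof (intro ideal_gen_least subsetI)
    show "is_ideal (mon_ideal (A + B) :: ('n, 'k) mpoly set)"
      unfolding mon_ideal_def by (rule is_ideal_ideal_gen)
    fix x :: "('n, 'k) mpoly"
    assume "x \<in> {a * b |a b. a \<in> mon_ideal A \<and> b \<in> mon_ideal B}"
    then obtain a b :: "('n, 'k) mpoly" where x: "x = a * b" "a \<in> mon_ideal A" "b \<in> mon_ideal B"
      by blast
    have "\<gamma> \<in> upset (A + B)" if \<gamma>: "\<gamma> \<in> Poly_Mapping.keys x" for \<gamma>
    proof -
      obtain p q where pq: "\<gamma> = p + q" "p \<in> Poly_Mapping.keys a" "q \<in> Poly_Mapping.keys b"
        using \<gamma> keys_mult[of a b] x(1) by blast
      then obtain \<alpha> \<beta> where \<alpha>\<beta>: "\<alpha> \<in> A" "exp_le \<alpha> p" "\<beta> \<in> B" "exp_le \<beta> q"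
        using keys_mon_ideal[OF x(2)] keys_mon_ideal[OF x(3)] unfolding upset_def by blast
      then have "\<alpha> + \<beta> \<in> A + B"
        unfolding set_plus_def by blast
      moreover have "exp_le (\<alpha> + \<beta>) \<gamma>"
        unfolding pq(1) using \<alpha>\<beta> by (simp add: exp_le_add_mono)
      ultimately show ?thesis
        unfolding upset_def by blast
    qed
    then show "x \<in> mon_ideal (A + B)"
      by (auto intro: mon_ideal_if_keys)
  qed
next
  show "(mon_ideal (A + B) :: ('n, 'k) mpoly set) \<subseteq> ideal_mult (mon_ideal A) (mon_ideal B)"
    unfolding mon_ideal_def[of "A + B"] ideal_mult_def
  proof (intro ideal_gen_least is_ideal_ideal_gen subsetI)
    fix x :: "('n, 'k) mpoly"
    assume "x \<in> monom ` (A + B)"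
    then obtain \<alpha> \<beta> where "\<alpha> \<in> A" "\<beta> \<in> B" "x = monom \<alpha> * monom \<beta>"
      unfolding set_plus_def by (auto simp: monom_mult)
    moreover have "(monom \<alpha> :: ('n, 'k) mpoly) \<in> mon_ideal A" "(monom \<beta> :: ('n, 'k) mpoly) \<in> mon_ideal B"
      using \<open>\<alpha> \<in> A\<close> \<open>\<beta> \<in> B\<close> subset_upset by (auto simp: monom_mem_mon_ideal_iff)
    ultimately show "x \<in> ideal_gen {a * b |a b. a \<in> mon_ideal A \<and> b \<in> mon_ideal B}"
      by (intro ideal_gen_gen) blast
  qed
qed

lemma mingens_mon_ideal: "mingens (mon_ideal A :: ('n, 'k::field) mpoly set) = minimal_elems (upset A)"
  unfolding mingens_def minimal_elems_def by (simp add: monom_mem_mon_ideal_iff)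

lemma lookup_mult_monom:
  "Poly_Mapping.lookup (f * monom \<gamma>) (\<beta> + \<gamma>) = Poly_Mapping.lookup (f :: ('n, 'k::field) mpoly) \<beta>"
  by (simp add: lookup_mult monom_def lookup_single when_commute[of _ "\<gamma> = _"] mult_when)

lemma ideal_colon_mon_ideal:
  "ideal_colon (mon_ideal X) (mon_ideal Y :: ('n, 'k::field) mpoly set)
     = mon_ideal {v. \<forall>y\<in>upset Y. v + y \<in> upset X}" (is "_ = mon_ideal ?C")
proof -
  have "upclosed ?C"
    using upclosed_upset by (rule upclosed_colon_set)
  have "f \<in> ideal_colon (mon_ideal X) (mon_ideal Y) \<longleftrightarrow> Poly_Mapping.keys f \<subseteq> ?C"
    for f :: "('n, 'k) mpoly"
  proof
    assume f: "f \<in> ideal_colon (mon_ideal X) (mon_ideal Y)"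
    show "Poly_Mapping.keys f \<subseteq> ?C"
    proof (intro subsetI CollectI ballI)
      fix \<beta> y assume "\<beta> \<in> Poly_Mapping.keys f" "y \<in> upset Y"
      then have "\<beta> + y \<in> Poly_Mapping.keys (f * monom y)"
        by (simp add: in_keys_iff lookup_mult_monom)
      moreover from \<open>y \<in> upset Y\<close> have "f * monom y \<in> mon_ideal X"
        using f unfolding ideal_colon_def by (simp add: monom_mem_mon_ideal_iff)
      ultimately show "\<beta> + y \<in> upset X"
        using keys_mon_ideal by blast
    qed
  next
    assume f: "Poly_Mapping.keys f \<subseteq> ?C"
    have "f * j \<in> mon_ideal X" if j: "j \<in> mon_ideal Y" for j
    proof (rule mon_ideal_if_keys, rule subsetI)
      fix \<gamma> assume "\<gamma> \<in> Poly_Mapping.keys (f * j)"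
      then obtain a b where "\<gamma> = a + b" "a \<in> Poly_Mapping.keys f" "b \<in> Poly_Mapping.keys j"
        using keys_mult[of f j] by blast
      then show "\<gamma> \<in> upset X"
        using f keys_mon_ideal[OF j] by blast
    qed
    then show "f \<in> ideal_colon (mon_ideal X) (mon_ideal Y)"
      unfolding ideal_colon_def by blast
  qed
  then show ?thesis
    using \<open>upclosed ?C\<close> by (auto simp: mem_mon_ideal_iff upset_eq_self)
qed

section \<open>Powers of a monomial ideal\<close>

definition sumset_pow :: "'a::comm_monoid_add set \<Rightarrow> nat \<Rightarrow> 'a set" where
  "sumset_pow S k = {sum_mset A |A. set_mset A \<subseteq> S \<and> size A = k}"

lemma sumset_pow_0 [simp]: "sumset_pow S 0 = {0}"
  unfolding sumset_pow_def by auto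

lemma sumset_pow_Suc: "sumset_pow S (Suc k) = S + sumset_pow S k"
proof (intro set_eqI iffI)
  fix x assume "x \<in> sumset_pow S (Suc k)"
  then obtain A where "set_mset A \<subseteq> S" "size A = Suc k" "x = sum_mset A"
    unfolding sumset_pow_def by blast
  moreover from \<open>size A = Suc k\<close> obtain s B where "A = add_mset s B"
    by (metis size_eq_Suc_imp_eq_union)
  ultimately show "x \<in> S + sumset_pow S k"
    unfolding sumset_pow_def set_plus_def by auto
next
  fix x assume "x \<in> S + sumset_pow S k"
  then obtain s A where "s \<in> S" "set_mset A \<subseteq> S" "size A = k" "x = s + sum_mset A"
    unfolding sumset_pow_def set_plus_def by blast
  then show "x \<in> sumset_pow S (Suc k)"
    unfolding sumset_pow_def by (intro CollectI exI[of _ "add_mset s A"]) auto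
qed

lemma sumset_pow_1 [simp]: "sumset_pow S 1 = S"
  using sumset_pow_Suc[of S 0] by simp

lemma ideal_pow_mon_ideal: "ideal_pow (mon_ideal S :: ('n, 'k::field) mpoly set) k = mon_ideal (sumset_pow S k)"
proof (induction k)
  case 0
  then show ?case
    by (auto simp: mem_mon_ideal_iff upset_def)
next
  case (Suc k)
  then show ?case
    by (simp add: mon_ideal_mult sumset_pow_Suc)
qed

definition pow_exps :: "('n \<Rightarrow>\<^sub>0 nat) set \<Rightarrow> nat \<Rightarrow> ('n \<Rightarrow>\<^sub>0 nat) set" where
  "pow_exps S k = upset (sumset_pow S k)"

lemma upclosed_pow_exps: "upclosed (pow_exps S k)"
  unfolding pow_exps_def by (rule upclosed_upset)

lemma pow_exps_upclosedD: "w \<in> pow_exps S k \<Longrightarrow> exp_le w w' \<Longrightarrow> w' \<in> pow_exps S k"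
  using upclosed_pow_exps by (rule upclosedD)

lemma pow_exps_0 [simp]: "pow_exps S 0 = UNIV"
  unfolding pow_exps_def upset_def by auto

lemma pow_exps_1: "pow_exps S 1 = upset S"
  unfolding pow_exps_def sumset_pow_1 ..

lemma subset_pow_exps_1: "S \<subseteq> pow_exps S 1"
  unfolding pow_exps_1 by (rule subset_upset)

lemma mem_pow_exps_iff:
  "w \<in> pow_exps S k \<longleftrightarrow> (\<exists>A. set_mset A \<subseteq> S \<and> size A = k \<and> exp_le (sum_mset A) w)"
  unfolding pow_exps_def upset_def sumset_pow_def by blast

lemma pow_exps_add:
  assumes "x \<in> pow_exps S a" "y \<in> pow_exps S b"
  shows "x + y \<in> pow_exps S (a + b)"
proof -
  obtain A B where "set_mset A \<subseteq> S" "size A = a" "exp_le (sum_mset A) x"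
    "set_mset B \<subseteq> S" "size B = b" "exp_le (sum_mset B) y"
    using assms unfolding mem_pow_exps_iff by blast
  then show ?thesis
    unfolding mem_pow_exps_iff by (intro exI[of _ "A + B"]) (auto intro: exp_le_add_mono)
qed

lemma sum_mset_mem_pow_exps: "set_mset A \<subseteq> pow_exps S 1 \<Longrightarrow> sum_mset A \<in> pow_exps S (size A)"
proof (induction A)
  case (add x A)
  then show ?case
    using pow_exps_add[of x S 1 "sum_mset A" "size A"] by simp
qed simp

lemma pow_exps_Suc_obtain:
  assumes "y \<in> pow_exps S (Suc k)"
  obtains s p where "s \<in> S" "p \<in> pow_exps S k" "exp_le (s + p) y"
proof -
  obtain s q where "s \<in> S" "q \<in> sumset_pow S k" "exp_le (s + q) y"
    using assms unfolding pow_exps_def upset_def sumset_pow_Suc set_plus_def by blast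
  then show thesis
    using that subset_upset[of "sumset_pow S k"] unfolding pow_exps_def by blast
qed

lemma pow_exps_antimono: "k \<le> l \<Longrightarrow> pow_exps S l \<subseteq> pow_exps S k"
proof (rule lift_Suc_antimono_le[of "pow_exps S"])
  fix k show "pow_exps S (Suc k) \<subseteq> pow_exps S k"
  proof
    fix y assume "y \<in> pow_exps S (Suc k)"
    then obtain s p where "p \<in> pow_exps S k" "exp_le (s + p) y"
      by (rule pow_exps_Suc_obtain)
    then show "y \<in> pow_exps S k"
      using exp_le_trans[OF exp_le_add_left] pow_exps_upclosedD by blast
  qed
qed

section \<open>Good ideals\<close>

lemma sum_unitv [simp]: "(\<Sum>j\<in>UNIV. unitv t (i :: 'n::finite) j) = t"
  unfolding unitv_def by simp

lemma lookup_shift: "Poly_Mapping.lookup (shift I a) j = a j * pdeg I j"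
  unfolding shift_def by (simp add: lookup_sum lookup_single when_def)

lemma shift_unitv: "shift I (unitv t i) = Poly_Mapping.single i (t * pdeg I i)"
  by (intro poly_mapping_eqI) (simp add: lookup_shift lookup_single when_def unitv_def)

lemma shift_le_box: "\<alpha> \<in> box I a \<Longrightarrow> exp_le (shift I a) \<alpha>"
  unfolding box_def exp_le_def by (simp add: lookup_shift)

locale good_monomial_ideal =
  fixes I :: "('n::finite, 'k::field) mpoly set" and S :: "('n \<Rightarrow>\<^sub>0 nat) set"
  assumes good: "good I" and I_eq: "I = mon_ideal S"
begin

abbreviation E :: "nat \<Rightarrow> ('n \<Rightarrow>\<^sub>0 nat) set" where
  "E \<equiv> pow_exps S"

abbreviation d :: "'n \<Rightarrow> nat" where
  "d \<equiv> pdeg I"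

lemma ideal_pow_eq: "ideal_pow I k = mon_ideal (E k)"
  by (simp add: I_eq ideal_pow_mon_ideal pow_exps_def mon_ideal_upset)

lemma mingens_ideal_pow: "mingens (ideal_pow I k) = minimal_elems (E k)"
  by (simp add: ideal_pow_eq mingens_mon_ideal upset_eq_self upclosed_pow_exps)

lemma mingens_I: "mingens I = minimal_elems (E 1)"
  unfolding I_eq mingens_mon_ideal pow_exps_1 ..

lemma monom_mem_I_iff: "monom w \<in> I \<longleftrightarrow> w \<in> E 1"
  unfolding I_eq monom_mem_mon_ideal_iff pow_exps_1 ..

lemma good_box: "1 \<le> l \<Longrightarrow> \<alpha> \<in> minimal_elems (E l) \<Longrightarrow> \<exists>a. sum a UNIV = l - 1 \<and> \<alpha> \<in> box I a"
  using good unfolding good_def mingens_ideal_pow by blast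

lemma zero_notin_E1: "0 \<notin> E 1"
proof
  assume "0 \<in> E 1"
  then have "1 \<in> I"
    using monom_mem_I_iff[of 0] by (simp add: monom_def)
  then have "monom 0 \<in> radical I"
    unfolding radical_def by (auto intro: exI[of _ 0])
  then have "monom 0 \<in> (mon_ideal (range (\<lambda>i. Poly_Mapping.single i 1)) :: ('n, 'k) mpoly set)"
    using good unfolding good_def m_primary_def max_ideal_def mon_ideal_def var_def image_image by simp
  then obtain i :: 'n where "exp_le (Poly_Mapping.single i 1) 0"
    unfolding monom_mem_mon_ideal_iff upset_def by blast
  then show False
    unfolding exp_le_def by (metis lookup_single_eq lookup_zero not_one_le_zero)
qed

lemma pure_power_exists: "\<exists>c. Poly_Mapping.single i c \<in> E 1"
proof -
  have "(var i :: ('n, 'k) mpoly) \<in> radical I"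
    using good unfolding good_def m_primary_def max_ideal_def by (simp add: ideal_gen_gen)
  then obtain c where "(var i :: ('n, 'k) mpoly) ^ c \<in> I"
    unfolding radical_def by blast
  moreover have "(var i :: ('n, 'k) mpoly) ^ c = monom (Poly_Mapping.single i c)"
    by (induction c) (simp_all add: var_def monom_def mult_single single_add[symmetric] add.commute)
  ultimately show ?thesis
    by (auto simp: monom_mem_I_iff)
qed

lemma pdeg_eq_Least: "d i = (LEAST c. Poly_Mapping.single i c \<in> E 1)"
  unfolding pdeg_def mingens_I single_mem_minimal_elems_iff[OF pure_power_exists] by simp

lemma pure_power_mem: "Poly_Mapping.single i (d i) \<in> E 1"
  unfolding pdeg_eq_Least using pure_power_exists by (rule LeastI_ex)

lemma pdeg_pos: "0 < d i"
  using pure_power_mem[of i] zero_notin_E1 by (metis gr0I single_zero)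

lemma pure_power_pow_mem: "Poly_Mapping.single i (t * d i) \<in> E t"
proof (induction t)
  case (Suc t)
  then show ?case
    using pow_exps_add[OF pure_power_mem Suc.IH] by (simp add: single_add)
qed simp

lemma shift_mem_pow_exps: "shift I a \<in> E (sum a UNIV)"
proof -
  have "(\<Sum>j\<in>J. Poly_Mapping.single j (a j * d j)) \<in> E (sum a J)" if "finite J" for J
    using that by (induction J rule: finite_induct) (simp_all add: pow_exps_add pure_power_pow_mem)
  then show ?thesis
    unfolding shift_def by simp
qed

section \<open>The weighted degree\<close>

definition L :: nat where
  "L = (\<Prod>j\<in>UNIV. d j)"

text \<open>\<open>wdeg w = L \<cdot> \<Sum>\<^sub>j w\<^sub>j / d\<^sub>j\<close> with denominators cleared, so that every pure power
  \<open>\<mu>\<^sub>j\<close> has weight \<open>L\<close>.\<close>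
definition wdeg :: "('n \<Rightarrow>\<^sub>0 nat) \<Rightarrow> nat" where
  "wdeg w = (\<Sum>j\<in>UNIV. Poly_Mapping.lookup w j * (L div d j))"

lemma L_pos: "0 < L"
  unfolding L_def using pdeg_pos by (simp add: prod_pos)

lemma pdeg_mult_weight: "d j * (L div d j) = L"
  unfolding L_def by (simp add: dvd_prodI)

lemma weight_pos: "0 < L div d j"
  using pdeg_mult_weight[of j] L_pos by (metis gr0I mult_0_right)

lemma wdeg_add: "wdeg (x + y) = wdeg x + wdeg y"
  unfolding wdeg_def by (simp add: lookup_add distrib_right sum.distrib)

lemma wdeg_mono: "exp_le x y \<Longrightarrow> wdeg x \<le> wdeg y"
  unfolding wdeg_def exp_le_def by (intro sum_mono mult_le_mono1) auto

lemma wdeg_strict_mono: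
  assumes "exp_le x y" "x \<noteq> y"
  shows "wdeg x < wdeg y"
proof -
  obtain j where "Poly_Mapping.lookup x j < Poly_Mapping.lookup y j"
    using assms by (rule exp_le_strict_imp_less)
  then show ?thesis
    unfolding wdeg_def using assms(1) weight_pos[of j]
    by (intro sum_strict_mono_ex1) (auto simp: exp_le_def)
qed

lemma wdeg_shift: "wdeg (shift I a) = sum a UNIV * L"
  unfolding wdeg_def lookup_shift sum_distrib_right
  by (simp add: pdeg_mult_weight mult.assoc)

lemma wdeg_sum_mset: "wdeg (sum_mset A) = (\<Sum>w\<in>#A. wdeg w)"
  by (induction A) (simp_all add: wdeg_add, simp add: wdeg_def)

lemma wdeg_replicate: "wdeg (sum_mset (replicate_mset n u)) = n * wdeg u"
  by (induction n) (simp_all add: wdeg_add, simp add: wdeg_def)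

text \<open>Goodness only yields the bound \<open>(l - 1) L\<close>; applying it to high powers of a single
  element of \<open>I\<close> improves this to \<open>l L\<close>.\<close>
lemma wdeg_pow_exps_ge_pred:
  assumes "1 \<le> l" "w \<in> E l"
  shows "(l - 1) * L \<le> wdeg w"
proof -
  obtain g where g: "g \<in> minimal_elems (E l)" "exp_le g w"
    using assms(2) by (rule exists_minimal_elem_below)
  then obtain a where a: "sum a UNIV = l - 1" "g \<in> box I a"
    using good_box assms(1) by blast
  then have "(l - 1) * L \<le> wdeg g"
    using wdeg_mono[OF shift_le_box[OF a(2)]] by (simp add: wdeg_shift)
  also have "\<dots> \<le> wdeg w"
    using g(2) by (rule wdeg_mono)
  finally show ?thesis .
qed

lemma wdeg_E1_ge: "u \<in> E 1 \<Longrightarrow> L \<le> wdeg u"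
proof (rule ccontr)
  assume u: "u \<in> E 1" and "\<not> L \<le> wdeg u"
  then have "(L + 1) * (wdeg u + 1) \<le> (L + 1) * L"
    by (intro mult_le_mono2) simp
  then have "(L + 1) * wdeg u < L * L"
    by (simp add: algebra_simps)
  moreover have "sum_mset (replicate_mset (L + 1) u) \<in> E (L + 1)"
    using sum_mset_mem_pow_exps[of "replicate_mset (L + 1) u"] u by simp
  from wdeg_pow_exps_ge_pred[OF _ this, unfolded wdeg_replicate]
  have "L * L \<le> (L + 1) * wdeg u"
    by simp
  ultimately show False
    by simp
qed

lemma wdeg_pow_exps_ge: "w \<in> E l \<Longrightarrow> l * L \<le> wdeg w"
proof -
  assume "w \<in> E l"
  then obtain A where A: "set_mset A \<subseteq> S" "size A = l" "exp_le (sum_mset A) w"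
    unfolding mem_pow_exps_iff by blast
  have "size A * L \<le> (\<Sum>u\<in>#A. wdeg u)"
    using A(1)
  proof (induction A)
    case (add u A)
    then have "L \<le> wdeg u"
      using subset_pow_exps_1[of S] by (intro wdeg_E1_ge) auto
    with add show ?case
      by simp
  qed simp
  also have "\<dots> \<le> wdeg w"
    using wdeg_mono[OF A(3)] by (simp add: wdeg_sum_mset)
  finally show ?thesis
    using A(2) by simp
qed

lemma minimal_if_wdeg_eq:
  assumes "w \<in> E l" "wdeg w = l * L"
  shows "w \<in> minimal_elems (E l)"
  unfolding minimal_elems_def
proof (intro CollectI conjI allI impI)
  fix \<beta> assume "exp_le \<beta> w \<and> \<beta> \<noteq> w"
  then have "wdeg \<beta> < l * L"
    using wdeg_strict_mono assms(2) by metis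
  then show "\<beta> \<notin> E l"
    using wdeg_pow_exps_ge leD by blast
qed (rule assms(1))

section \<open>The ideals \<open>I\<^sub>t\<^sub>e\<^sub>i\<close> as colon ideals\<close>

text \<open>The exponents of \<open>I\<^bsup>t+1\<^esup> : \<mu>\<^sub>i\<^sup>t\<close>.\<close>
definition colon_exps :: "'n \<Rightarrow> nat \<Rightarrow> ('n \<Rightarrow>\<^sub>0 nat) set" where
  "colon_exps i t = {v. v + Poly_Mapping.single i (t * d i) \<in> E (Suc t)}"

lemma upclosed_colon_exps: "upclosed (colon_exps i t)"
  unfolding upclosed_def colon_exps_def
  using pow_exps_upclosedD exp_le_add_mono[OF _ exp_le_refl] by blast

lemma colon_exps_Suc: "colon_exps i t \<subseteq> colon_exps i (Suc t)"
proof
  fix v assume "v \<in> colon_exps i t"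
  then have "Poly_Mapping.single i (d i) + (v + Poly_Mapping.single i (t * d i)) \<in> E (1 + Suc t)"
    unfolding colon_exps_def by (intro pow_exps_add pure_power_mem) simp
  then show "v \<in> colon_exps i (Suc t)"
    unfolding colon_exps_def by (simp add: single_add algebra_simps)
qed

lemma colon_exps_if_large:
  assumes "d j \<le> Poly_Mapping.lookup v j"
  shows "v \<in> colon_exps i t"
proof -
  have "Poly_Mapping.single j (d j) + Poly_Mapping.single i (t * d i) \<in> E (1 + t)"
    by (intro pow_exps_add pure_power_mem pure_power_pow_mem)
  moreover have "exp_le (Poly_Mapping.single j (d j) + Poly_Mapping.single i (t * d i))
      (v + Poly_Mapping.single i (t * d i))"
    using assms by (intro exp_le_add_mono) (auto simp: exp_le_def lookup_single when_def)
  ultimately show ?thesis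
    unfolding colon_exps_def by (auto intro: pow_exps_upclosedD)
qed

lemma pure_sum_minimal_in_box:
  assumes "j \<noteq> i"
  shows "Poly_Mapping.single j (d j) + Poly_Mapping.single i (t * d i)
    \<in> box I (unitv t i) \<inter> minimal_elems (E (Suc t))"
proof -
  have "Poly_Mapping.single j (d j) + Poly_Mapping.single i (t * d i) \<in> E (1 + t)"
    by (intro pow_exps_add pure_power_mem pure_power_pow_mem)
  moreover have "wdeg (Poly_Mapping.single j (d j) + Poly_Mapping.single i (t * d i)) = Suc t * L"
    using wdeg_shift[of "unitv 1 j"] wdeg_shift[of "unitv t i"]
    by (simp add: wdeg_add shift_unitv)
  ultimately have "Poly_Mapping.single j (d j) + Poly_Mapping.single i (t * d i) \<in> minimal_elems (E (Suc t))"
    by (intro minimal_if_wdeg_eq) simp_all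
  moreover have "Poly_Mapping.single j (d j) + Poly_Mapping.single i (t * d i) \<in> box I (unitv t i)"
    using assms unfolding box_def unitv_def by (auto simp: lookup_add lookup_single when_def)
  ultimately show ?thesis
    by blast
qed

lemma minimal_below_in_box:
  assumes g: "g \<in> minimal_elems (E (Suc t))" "exp_le g (v + Poly_Mapping.single i (t * d i))"
    and small: "\<And>j. j \<noteq> i \<Longrightarrow> Poly_Mapping.lookup v j < d j"
  shows "g \<in> box I (unitv t i)"
proof -
  obtain a where a: "sum a UNIV = t" "g \<in> box I a"
    using good_box[OF _ g(1)] by auto
  have "a j = 0" if "j \<noteq> i" for j
  proof (rule ccontr)
    assume "a j \<noteq> 0"
    then have "d j \<le> a j * d j"
      by simp
    also have "\<dots> \<le> Poly_Mapping.lookup g j"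
      using a(2) unfolding box_def by blast
    also have "\<dots> \<le> Poly_Mapping.lookup v j"
      using g(2) that unfolding exp_le_def by (metis add.right_neutral lookup_add lookup_single_not_eq)
    finally show False
      using small[OF that] by simp
  qed
  moreover from this have "a i = t"
    using a(1) sum.remove[of UNIV i a] by simp
  ultimately have "a = unitv t i"
    unfolding unitv_def by auto
  then show ?thesis
    using a(2) by simp
qed

lemma Ia_unitv_eq: "Ia I (unitv t i) = mon_ideal (colon_exps i t)"
proof -
  define sh where "sh = Poly_Mapping.single i (t * d i)"
  define G where "G = {\<alpha> - sh |\<alpha>. \<alpha> \<in> box I (unitv t i) \<inter> minimal_elems (E (Suc t))}"
  have Ia_G: "Ia I (unitv t i) = mon_ideal G"
    unfolding Ia_def mon_ideal_def G_def sh_def shift_unitv mingens_ideal_pow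
    by (rule arg_cong[where f = ideal_gen]) auto
  have G_mem: "\<alpha> - sh \<in> G" "exp_le sh \<alpha>" if "\<alpha> \<in> box I (unitv t i)" "\<alpha> \<in> minimal_elems (E (Suc t))" for \<alpha>
    using that shift_le_box[OF that(1)] unfolding G_def sh_def shift_unitv by blast+
  have "G \<subseteq> colon_exps i t"
    using G_mem unfolding G_def colon_exps_def sh_def minimal_elems_def
    by (auto simp: exp_le_diff_add)
  then have "upset G \<subseteq> colon_exps i t"
    using upclosed_colon_exps unfolding upset_def by (blast intro: upclosedD)
  moreover have "v \<in> upset G" if v: "v \<in> colon_exps i t" for v
  proof (cases "\<exists>j. j \<noteq> i \<and> d j \<le> Poly_Mapping.lookup v j")
    case True
    then obtain j where j: "j \<noteq> i" "d j \<le> Poly_Mapping.lookup v j"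
      by blast
    then have "Poly_Mapping.single j (d j) \<in> G"
      using G_mem(1) pure_sum_minimal_in_box[OF j(1)] unfolding sh_def by fastforce
    moreover have "exp_le (Poly_Mapping.single j (d j)) v"
      using j(2) unfolding exp_le_def by (auto simp: lookup_single when_def)
    ultimately show ?thesis
      unfolding upset_def by blast
  next
    case False
    have "v + sh \<in> E (Suc t)"
      using v unfolding colon_exps_def sh_def by simp
    then obtain g where g: "g \<in> minimal_elems (E (Suc t))" "exp_le g (v + sh)"
      by (rule exists_minimal_elem_below)
    then have "g \<in> box I (unitv t i)"
      using False unfolding sh_def by (intro minimal_below_in_box) (auto simp: not_le)
    moreover have "exp_le (g - sh) v"
      using g(2) unfolding exp_le_def by (simp add: lookup_add lookup_minus le_diff_conv)
    ultimately show ?thesis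
      unfolding upset_def using G_mem(1) g(1) by blast
  qed
  ultimately have "upset G = upset (colon_exps i t)"
    using upset_eq_self[OF upclosed_colon_exps] by blast
  then show ?thesis
    unfolding Ia_G mon_ideal_eq_iff .
qed

lemma colon_exps_stable: "\<exists>q. \<forall>t\<ge>q. colon_exps i t = colon_exps i q"
proof -
  define B where "B = {v. \<forall>j. Poly_Mapping.lookup v j < d j}"
  have outside: "- B \<subseteq> colon_exps i t" for t
    unfolding B_def by (auto simp: not_less intro: colon_exps_if_large)
  have "finite B"
    unfolding B_def by (rule finite_subset[OF _ finite_exps_bounded[of d]]) (auto simp: less_imp_le)
  have "\<exists>q. \<forall>t\<ge>q. colon_exps i t \<inter> B = colon_exps i q \<inter> B"
    by (rule finite_mono_chain_stable[OF _ _ \<open>finite B\<close>]) (use colon_exps_Suc in auto)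
  then obtain q where q: "colon_exps i t \<inter> B = colon_exps i q \<inter> B" if "q \<le> t" for t
    by blast
  have "colon_exps i t = colon_exps i q" if "q \<le> t" for t
    using q[OF that] outside[of t] outside[of q] by blast
  then show ?thesis
    by blast
qed

definition stab_index :: "'n \<Rightarrow> nat" where
  "stab_index i = (LEAST q. \<forall>t\<ge>q. colon_exps i t = colon_exps i q)"

lemma colon_exps_stab_index: "stab_index i \<le> t \<Longrightarrow> colon_exps i t = colon_exps i (stab_index i)"
proof -
  have "\<forall>t\<ge>stab_index i. colon_exps i t = colon_exps i (stab_index i)"
    unfolding stab_index_def by (rule LeastI_ex[OF colon_exps_stable])
  then show "stab_index i \<le> t \<Longrightarrow> colon_exps i t = colon_exps i (stab_index i)"
    by blast
qed

section \<open>The Ratliff--Rush closure\<close>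

definition rr_exps :: "nat \<Rightarrow> ('n \<Rightarrow>\<^sub>0 nat) set" where
  "rr_exps k = {v. \<forall>y\<in>E k. v + y \<in> E (Suc k)}"

lemma upclosed_rr_exps: "upclosed (rr_exps k)"
  unfolding rr_exps_def using upclosed_pow_exps by (rule upclosed_colon_set)

lemma rr_exps_Suc: "rr_exps k \<subseteq> rr_exps (Suc k)"
proof
  fix v assume v: "v \<in> rr_exps k"
  have "v + y \<in> E (Suc (Suc k))" if "y \<in> E (Suc k)" for y
  proof -
    obtain s p where "s \<in> S" "p \<in> E k" "exp_le (s + p) y"
      using \<open>y \<in> E (Suc k)\<close> by (rule pow_exps_Suc_obtain)
    have "s + (v + p) \<in> E (1 + Suc k)"
      using v subset_pow_exps_1 \<open>s \<in> S\<close> \<open>p \<in> E k\<close> unfolding rr_exps_def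
      by (intro pow_exps_add) auto
    moreover have "exp_le (s + (v + p)) (v + y)"
      using exp_le_add_mono[OF exp_le_refl[of v] \<open>exp_le (s + p) y\<close>] by (simp add: ac_simps)
    ultimately show ?thesis
      using pow_exps_upclosedD by simp
  qed
  then show "v \<in> rr_exps (Suc k)"
    unfolding rr_exps_def by blast
qed

lemma mono_rr_exps: "mono rr_exps"
  unfolding mono_iff_le_Suc using rr_exps_Suc by blast

lemma ratliff_rush_eq: "ratliff_rush I = mon_ideal (\<Union>k. rr_exps k)"
proof -
  have "ideal_colon (ideal_pow I (k + 1)) (ideal_pow I k) = mon_ideal (rr_exps k)" for k
    unfolding ideal_pow_eq ideal_colon_mon_ideal rr_exps_def
    by (simp add: upset_eq_self upclosed_pow_exps)
  then show ?thesis
    unfolding ratliff_rush_def using mon_ideal_UN_mono[OF mono_rr_exps upclosed_rr_exps] by simp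
qed

lemma rr_exps_subset_colon_exps: "k \<le> t \<Longrightarrow> rr_exps k \<subseteq> colon_exps i t"
  using monoD[OF mono_rr_exps] pure_power_pow_mem unfolding rr_exps_def colon_exps_def by blast

definition small_gens :: "('n \<Rightarrow>\<^sub>0 nat) set" where
  "small_gens = E 1 \<inter> {u. \<forall>j. Poly_Mapping.lookup u j \<le> d j}"

lemma finite_small_gens: "finite small_gens"
  unfolding small_gens_def by (intro finite_Int disjI2 finite_exps_bounded)

lemma small_gen_below:
  assumes "u \<in> E 1"
  shows "\<exists>u'\<in>small_gens. exp_le u' u"
proof (cases "\<forall>j. Poly_Mapping.lookup u j \<le> d j")
  case True
  with assms show ?thesis
    unfolding small_gens_def using exp_le_refl by blast
next
  case False
  then obtain j where j: "d j < Poly_Mapping.lookup u j"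
    by (auto simp: not_le)
  have "Poly_Mapping.single j (d j) \<in> small_gens"
    unfolding small_gens_def using pure_power_mem by (auto simp: lookup_single when_def)
  moreover have "exp_le (Poly_Mapping.single j (d j)) u"
    using j unfolding exp_le_def by (auto simp: lookup_single when_def)
  ultimately show ?thesis
    by blast
qed

lemma pow_exps_small_gens:
  "y \<in> E k \<Longrightarrow> \<exists>A. size A = k \<and> set_mset A \<subseteq> small_gens \<and> exp_le (sum_mset A) y"
proof (induction k arbitrary: y)
  case 0
  show ?case
    by (intro exI[of _ "{#}"]) simp
next
  case (Suc k)
  obtain s p where s: "s \<in> S" "p \<in> E k" "exp_le (s + p) y"
    using Suc.prems by (rule pow_exps_Suc_obtain)
  obtain A where A: "size A = k" "set_mset A \<subseteq> small_gens" "exp_le (sum_mset A) p"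
    using Suc.IH[OF s(2)] by blast
  obtain s' where s': "s' \<in> small_gens" "exp_le s' s"
    using small_gen_below subset_pow_exps_1 s(1) by blast
  have "exp_le (s' + sum_mset A) (s + p)"
    using s'(2) A(3) by (rule exp_le_add_mono)
  then have "exp_le (sum_mset (add_mset s' A)) y"
    using s(3) by (simp add: exp_le_trans)
  with A(1,2) s'(1) show ?case
    by (intro exI[of _ "add_mset s' A"]) simp
qed

lemma colon_exps_add_shift:
  assumes "v \<in> colon_exps i T" "T \<le> m i"
  shows "v + shift I m \<in> E (Suc (sum m UNIV))"
proof -
  define m' where "m' = m(i := m i - T)"
  have "shift I m = Poly_Mapping.single i (T * d i) + shift I m'"
    using assms(2) by (intro poly_mapping_eqI)
      (auto simp: lookup_shift lookup_add lookup_single when_def m'_def diff_mult_distrib)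
  moreover have "sum m UNIV = T + sum m' UNIV"
    using assms(2) sum.remove[of UNIV i m] sum.remove[of UNIV i m'] by (simp add: m'_def)
  moreover have "(v + Poly_Mapping.single i (T * d i)) + shift I m' \<in> E (Suc T + sum m' UNIV)"
    using assms(1) unfolding colon_exps_def by (intro pow_exps_add shift_mem_pow_exps) simp
  ultimately show ?thesis
    by (simp add: add.assoc)
qed

text \<open>\<open>u\<^bsup>T L\<^esup> = \<Prod>\<^sub>j \<mu>\<^sub>j\<^bsup>T u\<^sub>j L / d\<^sub>j\<^esup>\<close> is a product of \<open>T \<cdot> wdeg u \<ge> T L\<close> pure powers
  in which some \<open>\<mu>\<^sub>i\<close> occurs at least \<open>T\<close> times.\<close>
lemma colon_exps_absorb_power:
  assumes v: "\<And>i. v \<in> colon_exps i T" and u: "u \<in> E 1"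
  shows "v + sum_mset (replicate_mset (T * L) u) \<in> E (Suc (T * L))"
proof -
  define m where "m j = T * (Poly_Mapping.lookup u j * (L div d j))" for j
  have "m j * d j = T * L * Poly_Mapping.lookup u j" for j
    unfolding m_def using pdeg_mult_weight[of j] by (simp add: ac_simps)
  then have shift_m: "shift I m = sum_mset (replicate_mset (T * L) u)"
    by (intro poly_mapping_eqI) (simp add: lookup_shift lookup_sum_mset_replicate)
  have sum_m: "sum m UNIV = T * wdeg u"
    unfolding m_def wdeg_def by (simp add: sum_distrib_left)
  have "u \<noteq> 0"
    using u zero_notin_E1 by blast
  then obtain i where "Poly_Mapping.lookup u i \<noteq> 0"
    using poly_mapping_eqI[of u 0] by auto
  then have "T \<le> m i"
    unfolding m_def using weight_pos[of i] by simp
  then have "v + shift I m \<in> E (Suc (T * wdeg u))"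
    using colon_exps_add_shift[where m = m, OF v[of i] \<open>T \<le> m i\<close>] unfolding sum_m by simp
  moreover have "T * L \<le> T * wdeg u"
    using wdeg_E1_ge[OF u] by simp
  ultimately show ?thesis
    using pow_exps_antimono[of "Suc (T * L)" "Suc (T * wdeg u)" S] shift_m by auto
qed

lemma Inter_colon_exps_subset_rr_exps:
  assumes v: "\<And>i. v \<in> colon_exps i T"
  shows "v \<in> rr_exps (card small_gens * (T * L) + 1)" (is "_ \<in> rr_exps ?k")
  unfolding rr_exps_def
proof (intro CollectI ballI)
  fix y assume "y \<in> E ?k"
  then obtain A where A: "size A = ?k" "set_mset A \<subseteq> small_gens" "exp_le (sum_mset A) y"
    using pow_exps_small_gens by blast
  have "card small_gens * (T * L) < size A"
    using A(1) by simp
  then obtain u where u: "u \<in> small_gens" "T * L < count A u"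
    by (rule multiset_pigeonhole[OF A(2) finite_small_gens])
  define B where "B = A - replicate_mset (T * L) u"
  have AB: "A = replicate_mset (T * L) u + B"
    unfolding B_def using u(2) count_le_replicate_mset_subset_eq[of "T * L" A u]
    by (simp add: subset_mset.add_diff_inverse)
  have "u \<in> E 1" "set_mset B \<subseteq> E 1"
    using u(1) A(2) unfolding AB small_gens_def by auto
  then have "(v + sum_mset (replicate_mset (T * L) u)) + sum_mset B \<in> E (Suc (T * L) + size B)"
    by (intro pow_exps_add colon_exps_absorb_power v sum_mset_mem_pow_exps)
  moreover have "Suc (T * L) + size B = Suc ?k"
    using A(1) unfolding AB by simp
  moreover have "exp_le (v + sum_mset A) (v + y)"
    using A(3) by (simp add: exp_le_add_mono)
  ultimately show "v + y \<in> E (Suc ?k)"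
    unfolding AB by (auto simp: add.assoc intro: pow_exps_upclosedD)
qed

lemma UN_rr_exps_eq_Inter_colon_exps: "(\<Union>k. rr_exps k) = (\<Inter>i. colon_exps i (stab_index i))"
proof
  show "(\<Union>k. rr_exps k) \<subseteq> (\<Inter>i. colon_exps i (stab_index i))"
  proof (intro subsetI INT_I)
    fix v i assume "v \<in> (\<Union>k. rr_exps k)"
    then obtain k where "v \<in> rr_exps k"
      by blast
    moreover have "rr_exps k \<subseteq> colon_exps i (max k (stab_index i))"
      by (rule rr_exps_subset_colon_exps) simp
    moreover have "colon_exps i (max k (stab_index i)) = colon_exps i (stab_index i)"
      by (rule colon_exps_stab_index) simp
    ultimately show "v \<in> colon_exps i (stab_index i)"
      by blast
  qed
next
  define T where "T = Max (range stab_index)"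
  have stab_T: "colon_exps i (stab_index i) = colon_exps i T" for i
  proof -
    have "stab_index i \<le> T"
      unfolding T_def by (rule Max_ge) simp_all
    then show ?thesis
      by (rule colon_exps_stab_index[symmetric])
  qed
  show "(\<Inter>i. colon_exps i (stab_index i)) \<subseteq> (\<Union>k. rr_exps k)"
  proof
    fix v assume "v \<in> (\<Inter>i. colon_exps i (stab_index i))"
    then have "v \<in> colon_exps i T" for i
      unfolding stab_T by blast
    then show "v \<in> (\<Union>k. rr_exps k)"
      using Inter_colon_exps_subset_rr_exps by blast
  qed
qed

end

theorem mainTheorem10:
  fixes I :: "('n::finite, 'k::field) mpoly set"
  assumes "good I"
  shows "(\<forall>i. \<exists>q. \<forall>t\<ge>q. Ia I (unitv t i) = Ia I (unitv q i))
       \<and> ratliff_rush I =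
           (\<Inter>i. Ia I (unitv (LEAST q. \<forall>t\<ge>q. Ia I (unitv t i) = Ia I (unitv q i)) i))"
proof -
  obtain S where "I = mon_ideal S"
    using assms unfolding good_def monomial_ideal_def mon_ideal_def by blast
  then interpret good_monomial_ideal I S
    using assms by unfold_locales
  have Ia_eq_iff: "Ia I (unitv t i) = Ia I (unitv q i) \<longleftrightarrow> colon_exps i t = colon_exps i q" for t q i
    by (simp add: Ia_unitv_eq mon_ideal_eq_iff upset_eq_self upclosed_colon_exps)
  have "ratliff_rush I = mon_ideal (\<Inter>i. colon_exps i (stab_index i))"
    by (simp add: ratliff_rush_eq UN_rr_exps_eq_Inter_colon_exps)
  also have "\<dots> = (\<Inter>i. Ia I (unitv (stab_index i) i))"
    by (simp add: Ia_unitv_eq mon_ideal_Inter upclosed_colon_exps)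
  finally show ?thesis
    unfolding Ia_eq_iff stab_index_def using colon_exps_stable by simp
qed

end
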